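(* Assume $\clubsuit$ (the stick principle stated in the context). Then there is an uncountable almost disjoint family (on a countable set) which contains no uncountable anti-Luzin subfamily and no uncountable Luzin subfamily.
   Context: The principle (stick): there is a family $\mathcal S$ of countable subsets of $\omega_1$ with $|\mathcal S|=\omega_1$ such that every uncountable subset of $\omega_1$ contains some member of $\mathcal S$. An almost disjoint family is a collection of infinite sets whose pairwise intersections are finite. Let $\mathcal A$ be an uncountable almost disjoint family on a countable set $W$. $\mathcal A$ is Luzin iff there is an enumeration $\mathcal A=\{a_\alpha:\alpha<\omega_1\}$ such that for every finite $w\subseteq W$ and every $\alpha<\omega_1$ the set $\{\beta<\alpha: a_\alpha\cap a_\beta\subseteq w\}$ is finite. $\mathcal A$ is anti-Luzin iff for every uncountable $\mathcal B\subseteq\mathcal A$ there are uncountable $\mathcal C,\mathcal D\subseteq\mathcal B$ with $\bigcup\mathcal C\cap\bigcup\mathcal D$ finite. *)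

theory Defs
  imports "HOL-Library.Countable_Set"
begin

text \<open>omega1 is represented by a well-ordered type 'a whose universe is uncountable
  and all of whose proper initial segments are countable (order type omega_1).\<close>

definition omega1_type :: "'a::wellorder itself \<Rightarrow> bool" where
  "omega1_type _ \<longleftrightarrow> uncountable (UNIV :: 'a set) \<and> (\<forall>\<alpha>::'a. countable {\<beta>. \<beta> < \<alpha>})"

definition stick :: "'a::wellorder itself \<Rightarrow> bool" where
  "stick _ \<longleftrightarrow> (\<exists>S :: 'a set set.
      (\<forall>s\<in>S. countable s \<and> infinite s) \<and>
      (\<exists>f. bij_betw f (UNIV :: 'a set) S) \<and>
      (\<forall>X :: 'a set. uncountable X \<longrightarrow> (\<exists>s\<in>S. s \<subseteq> X)))"

definition almost_disjoint :: "'b set \<Rightarrow> 'b set set \<Rightarrow> bool" where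
  "almost_disjoint W A \<longleftrightarrow> A \<subseteq> Pow W \<and> (\<forall>a\<in>A. infinite a) \<and>
      (\<forall>a\<in>A. \<forall>b\<in>A. a \<noteq> b \<longrightarrow> finite (a \<inter> b))"

definition luzin :: "'a::wellorder itself \<Rightarrow> 'b set \<Rightarrow> 'b set set \<Rightarrow> bool" where
  "luzin _ W A \<longleftrightarrow> (\<exists>a :: 'a \<Rightarrow> 'b set. bij_betw a UNIV A \<and>
      (\<forall>w. finite w \<and> w \<subseteq> W \<longrightarrow> (\<forall>\<alpha>. finite {\<beta>. \<beta> < \<alpha> \<and> a \<alpha> \<inter> a \<beta> \<subseteq> w})))"

definition anti_luzin :: "'b set set \<Rightarrow> bool" where
  "anti_luzin A \<longleftrightarrow> (\<forall>B \<subseteq> A. uncountable B \<longrightarrow>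
      (\<exists>C D. C \<subseteq> B \<and> D \<subseteq> B \<and> uncountable C \<and> uncountable D \<and> finite (\<Union>C \<inter> \<Union>D)))"

end

theory Submission
  imports Defs
begin

text \<open>
  Using the stick sequence S, functions f \<alpha> :: nat \<Rightarrow> nat are built by recursion on \<alpha> < \<omega>_1 so
  that they are pairwise eventually different and, whenever \<eta> < \<alpha> and S \<eta> lies below \<alpha>,
  f \<alpha> agrees infinitely often with members of S \<eta>, yet from some point on never agrees with
  infinitely many of them. Each recursion step is a diagonalisation against countably many earlier
  functions and countably many guesses. The family consists of the graphs a \<alpha> of the f \<alpha>,
  coded as sets of naturals. Given uncountable subfamilies C and D, the stick puts some S \<eta>
  inside the indices of D, and a member a \<alpha> of C above \<eta> and S \<eta> meets \<Union>D infinitely: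
  no uncountable subfamily is anti-Luzin. Given an enumeration of an uncountable subfamily, pick
  S \<eta> among its members and a \<alpha> enumerated after all of them: infinitely many earlier members
  meet a \<alpha> inside one finite set, so the enumeration is not Luzin.
\<close>

lemma eventually_inj_on_sequentially:
  assumes "finite S" and "\<And>i j. i \<in> S \<Longrightarrow> j \<in> S \<Longrightarrow> i \<noteq> j \<Longrightarrow> finite {n. h i n = h j n}"
  shows "eventually (\<lambda>n. inj_on (\<lambda>i. h i n) S) sequentially"
proof -
  have "eventually (\<lambda>n. h i n \<noteq> h j n) sequentially" if "i \<in> S" "j \<in> S" "i \<noteq> j" for i j
    using assms(2)[OF that] by (simp add: cofinite_eq_sequentially[symmetric] eventually_cofinite)
  then have "eventually (\<lambda>n. \<forall>i\<in>S. \<forall>j\<in>S. i \<noteq> j \<longrightarrow> h i n \<noteq> h j n) sequentially"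
    using assms(1) by (simp add: eventually_ball_finite)
  then show ?thesis
    by (rule eventually_mono) (auto simp: inj_on_def)
qed

lemma strict_mono_choice_sequentially:
  fixes P :: "nat \<Rightarrow> nat \<Rightarrow> bool"
  assumes "\<And>r. eventually (P r) sequentially"
  shows "\<exists>H. strict_mono H \<and> (\<forall>r. P r (H r))"
proof -
  have "\<exists>y. P r y \<and> x < y" for r x
  proof -
    have "eventually (\<lambda>n. P r n \<and> x < n) sequentially"
      using assms eventually_gt_at_top by (rule eventually_conj)
    then obtain N where "\<forall>n\<ge>N. P r n \<and> x < n"
      by (auto simp: eventually_sequentially)
    then show ?thesis by blast
  qed
  then have "\<exists>H. \<forall>r. P r (H r) \<and> H r < H (Suc r)"
    using dependent_nat_choice[of P "\<lambda>_ x y. x < y"] by blast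
  then show ?thesis
    using strict_mono_Suc_iff by blast
qed

text \<open>
  From stage H j on, diag avoids the value of h (\<phi> j). Stage H r is reserved
  for agreeing with a member of T (fst (prod_decode r)); this is possible because (r + 2)^2 of its
  members take distinct values there, more than are excluded. From stage H k on, diag avoids the
  members of T k protected so far, each chosen among those not yet hit; popular values are excluded
  so that infinitely many such members remain.
\<close>

locale diagonalization =
  fixes h :: "'i \<Rightarrow> nat \<Rightarrow> nat" and I :: "'i set" and \<phi> :: "nat \<Rightarrow> 'i"
    and T :: "nat \<Rightarrow> 'i set" and H :: "nat \<Rightarrow> nat"
  assumes I_subset_range: "I \<subseteq> range \<phi>"
    and T_subset: "T k \<subseteq> I" and infinite_T: "infinite (T k)"
    and strict_mono_H: "strict_mono H"
    and injective_at_H: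
      "\<exists>S \<subseteq> T (fst (prod_decode r)). card S = (r + 2)\<^sup>2 \<and> inj_on (\<lambda>i. h i (H r)) S"
begin

definition unhit :: "(nat \<Rightarrow> nat) \<Rightarrow> nat \<Rightarrow> nat \<Rightarrow> 'i set" where
  "unhit p k n = {i \<in> T k. \<forall>m\<in>{H k..<n}. h i m \<noteq> p m}"

definition protected :: "(nat \<Rightarrow> nat) \<Rightarrow> nat \<Rightarrow> nat \<Rightarrow> 'i" where
  "protected p k r = (SOME i. i \<in> unhit p k (H r) \<and> i \<notin> \<phi> ` {..<r})"

definition forbidden :: "(nat \<Rightarrow> nat) \<Rightarrow> nat \<Rightarrow> nat set" where
  "forbidden p n = (\<lambda>j. h (\<phi> j) n) ` {j. H j \<le> n} \<union>
     (\<lambda>(k, r). h (protected p k r) n) ` {(k, r). k \<le> r \<and> H r \<le> n}"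

definition popular :: "(nat \<Rightarrow> nat) \<Rightarrow> nat \<Rightarrow> nat \<Rightarrow> nat set" where
  "popular p k n = {v. finite {i \<in> unhit p k n. h i n \<noteq> v}}"

definition excluded :: "(nat \<Rightarrow> nat) \<Rightarrow> nat \<Rightarrow> nat set" where
  "excluded p n = forbidden p n \<union> (\<Union>k\<in>{k. H k \<le> n}. popular p k n)"

definition admissible :: "(nat \<Rightarrow> nat) \<Rightarrow> nat \<Rightarrow> nat \<Rightarrow> bool" where
  "admissible p n v \<longleftrightarrow> v \<notin> excluded p n \<and>
     (\<forall>r. H r = n \<longrightarrow> (\<exists>i\<in>T (fst (prod_decode r)). v = h i n))"

lemma H_le_H_iff: "H j \<le> H r \<longleftrightarrow> j \<le> r"
  using strict_mono_H by (rule strict_mono_less_eq)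

lemma le_H: "j \<le> H j"
  using strict_mono_H by (rule strict_mono_imp_increasing)

lemma unhit_cong: "(\<And>m. m < n \<Longrightarrow> p m = q m) \<Longrightarrow> unhit p k n = unhit q k n"
  unfolding unhit_def by auto

lemma admissible_cong:
  assumes "\<And>m. m < n \<Longrightarrow> p m = q m"
  shows "admissible p n v = admissible q n v"
proof -
  have "protected p k r = protected q k r" if "H r \<le> n" for k r
    unfolding protected_def using unhit_cong[of "H r" p q k] assms that by simp
  then have "(\<lambda>(k, r). h (protected p k r) n) ` {(k, r). k \<le> r \<and> H r \<le> n} =
      (\<lambda>(k, r). h (protected q k r) n) ` {(k, r). k \<le> r \<and> H r \<le> n}"
    by (intro image_cong) auto
  then have "forbidden p n = forbidden q n"
    by (simp add: forbidden_def)
  moreover have "popular p k n = popular q k n" for k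
    unfolding popular_def using unhit_cong[of n p q k] assms by simp
  ultimately show ?thesis
    unfolding admissible_def excluded_def by simp
qed

lemma unhit_at_H: "unhit p k (H k) = T k"
  unfolding unhit_def by auto

lemma infinite_unhit_Suc:
  assumes "H k \<le> n" and "p n \<notin> popular p k n"
  shows "infinite (unhit p k (Suc n))"
proof -
  have "unhit p k (Suc n) = {i \<in> unhit p k n. h i n \<noteq> p n}"
    unfolding unhit_def using assms(1) by (auto simp: less_Suc_eq)
  with assms(2) show ?thesis
    unfolding popular_def by simp
qed

lemma infinite_unhit:
  assumes "\<And>m. m < n \<Longrightarrow> admissible p m (p m)" and "H k \<le> n"
  shows "infinite (unhit p k n)"
proof (cases "n = H k")
  case True
  then show ?thesis by (simp add: unhit_at_H infinite_T)
next
  case False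
  then obtain m where m: "n = Suc m" "H k \<le> m"
    using assms(2) by (cases n) auto
  then have "p m \<notin> popular p k m"
    using assms(1) unfolding admissible_def excluded_def by blast
  with m show ?thesis
    using infinite_unhit_Suc by blast
qed

lemma popular_subset_singleton:
  assumes "infinite (unhit p k n)"
  shows "\<exists>v. popular p k n \<subseteq> {v}"
proof -
  have "u = v" if "u \<in> popular p k n" "v \<in> popular p k n" for u v
  proof (rule ccontr)
    assume "u \<noteq> v"
    then have "unhit p k n \<subseteq> {i \<in> unhit p k n. h i n \<noteq> u} \<union> {i \<in> unhit p k n. h i n \<noteq> v}"
      by auto
    with that assms show False
      unfolding popular_def by (auto dest: finite_subset)
  qed
  then show ?thesis by blast
qed

lemma finite_popular: "infinite (unhit p k n) \<Longrightarrow> finite (popular p k n)"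
  using popular_subset_singleton finite_subset by blast

lemma card_popular_le_1:
  assumes "infinite (unhit p k n)"
  shows "card (popular p k n) \<le> 1"
proof -
  obtain v where "popular p k n \<subseteq> {v}"
    using popular_subset_singleton assms by blast
  then have "card (popular p k n) \<le> card {v}"
    by (intro card_mono) simp_all
  then show ?thesis by simp
qed

lemma finite_forbidden: "finite (forbidden p n)"
proof -
  have "{j. H j \<le> n} \<subseteq> {..n}"
    using le_H le_trans by blast
  moreover have "{(k, r). k \<le> r \<and> H r \<le> n} \<subseteq> {..n} \<times> {..n}"
    using le_H le_trans by fastforce
  ultimately show ?thesis
    unfolding forbidden_def by (auto dest: finite_subset)
qed

lemma card_forbidden_at_H: "card (forbidden p (H r)) \<le> (r + 1) + (r + 1)\<^sup>2"
proof -
  have "{j. H j \<le> H r} = {..r}"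
    by (auto simp: H_le_H_iff)
  then have phi: "card ((\<lambda>j. h (\<phi> j) (H r)) ` {j. H j \<le> H r}) \<le> r + 1"
    using card_image_le[of "{..r}"] by simp
  have pairs: "{(k, r'). k \<le> r' \<and> H r' \<le> H r} \<subseteq> {..r} \<times> {..r}"
    by (auto simp: H_le_H_iff)
  then have "card ((\<lambda>(k, r'). h (protected p k r') (H r)) ` {(k, r'). k \<le> r' \<and> H r' \<le> H r})
      \<le> card ({..r} \<times> {..r})"
    by (meson card_image_le card_mono finite_SigmaI finite_atMost finite_subset order_trans)
  then have prot: "card ((\<lambda>(k, r'). h (protected p k r') (H r)) ` {(k, r'). k \<le> r' \<and> H r' \<le> H r})
      \<le> (r + 1)\<^sup>2"
    by (simp add: card_cartesian_product power2_eq_square)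
  show ?thesis
    unfolding forbidden_def using card_Un_le phi prot by (meson add_mono order_trans)
qed

lemma finite_excluded:
  assumes "\<And>k. H k \<le> n \<Longrightarrow> infinite (unhit p k n)"
  shows "finite (excluded p n)"
proof -
  have "{k. H k \<le> n} \<subseteq> {..n}"
    using le_H le_trans by blast
  then show ?thesis
    unfolding excluded_def using finite_forbidden finite_popular assms
    by (auto dest: finite_subset)
qed

lemma card_excluded_at_H:
  assumes "\<And>k. k \<le> r \<Longrightarrow> infinite (unhit p k (H r))"
  shows "card (excluded p (H r)) < (r + 2)\<^sup>2"
proof -
  have "{k. H k \<le> H r} = {..r}"
    by (auto simp: H_le_H_iff)
  then have "card (excluded p (H r)) \<le> card (forbidden p (H r)) + card (\<Union>k\<le>r. popular p k (H r))"
    unfolding excluded_def by (simp add: card_Un_le)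
  also have "card (\<Union>k\<le>r. popular p k (H r)) \<le> (\<Sum>k\<le>r. card (popular p k (H r)))"
    by (rule card_UN_le) simp
  also have "\<dots> \<le> (\<Sum>k\<le>r. 1)"
    by (intro sum_mono card_popular_le_1 assms) simp
  finally have "card (excluded p (H r)) \<le> ((r + 1) + (r + 1)\<^sup>2) + (r + 1)"
    using card_forbidden_at_H[of p r] by simp
  then show ?thesis
    by (simp add: power2_eq_square)
qed

lemma admissible_exists:
  assumes "\<And>k. H k \<le> n \<Longrightarrow> infinite (unhit p k n)"
  shows "\<exists>v. admissible p n v"
proof (cases "\<exists>r. H r = n")
  case True
  then obtain r where n: "n = H r" by auto
  have unique: "r' = r" if "H r' = n" for r'
    using that n strict_mono_H strict_mono_eq by metis
  obtain S where S: "S \<subseteq> T (fst (prod_decode r))" "card S = (r + 2)\<^sup>2" "inj_on (\<lambda>i. h i n) S"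
    using injective_at_H n by blast
  have "card (excluded p n) < card ((\<lambda>i. h i n) ` S)"
    using card_excluded_at_H[of r p] assms n S by (simp add: H_le_H_iff card_image)
  then have "\<not> (\<lambda>i. h i n) ` S \<subseteq> excluded p n"
    using card_mono[OF finite_excluded[OF assms]] leD by blast
  then obtain i where i: "i \<in> S" "h i n \<notin> excluded p n" by blast
  have "\<exists>i'\<in>T (fst (prod_decode r')). h i n = h i' n" if "H r' = n" for r'
    using unique[OF that] S(1) i(1) by blast
  with i(2) show ?thesis
    unfolding admissible_def by blast
next
  case False
  obtain v where "v \<notin> excluded p n"
    using ex_new_if_finite[OF infinite_UNIV_nat finite_excluded[OF assms]] by blast
  with False show ?thesis
    unfolding admissible_def by blast
qed

definition diag :: "nat \<Rightarrow> nat" where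
  "diag = (SOME g. \<forall>n. admissible g n (g n))"

lemma admissible_diag: "admissible diag n (diag n)"
proof -
  have "\<exists>g. \<forall>n. admissible g n (g n)"
  proof (rule dependent_wellorder_choice)
    show "admissible p n v = admissible q n v" if "\<And>m. m < n \<Longrightarrow> p m = q m" for v p q n
      using that by (rule admissible_cong)
    show "\<exists>v. admissible p n v" if "\<And>m. m < n \<Longrightarrow> admissible p m (p m)" for n p
      using that by (intro admissible_exists infinite_unhit)
  qed
  from someI_ex[OF this] show ?thesis
    unfolding diag_def by blast
qed

lemma diag_not_forbidden: "diag n \<notin> forbidden diag n"
  using admissible_diag[of n] unfolding admissible_def excluded_def by blast

lemma infinite_unhit_diag: "H k \<le> n \<Longrightarrow> infinite (unhit diag k n)"
  using admissible_diag by (rule infinite_unhit)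

lemma protected_diag:
  assumes "k \<le> r"
  shows "protected diag k r \<in> unhit diag k (H r)" and "protected diag k r \<notin> \<phi> ` {..<r}"
proof -
  have "infinite (unhit diag k (H r) - \<phi> ` {..<r})"
    using infinite_unhit_diag assms by (simp add: H_le_H_iff Diff_infinite_finite)
  then have "\<exists>i. i \<in> unhit diag k (H r) \<and> i \<notin> \<phi> ` {..<r}"
    by (metis Diff_iff finite.emptyI ex_in_conv)
  from someI_ex[OF this] show "protected diag k r \<in> unhit diag k (H r)"
    and "protected diag k r \<notin> \<phi> ` {..<r}"
    unfolding protected_def by blast+
qed

lemma finite_agree_diag:
  assumes "i \<in> I"
  shows "finite {n. diag n = h i n}"
proof -
  obtain j where j: "i = \<phi> j"
    using assms I_subset_range by blast
  have "diag n \<noteq> h i n" if "H j \<le> n" for n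
  proof -
    have "h i n \<in> forbidden diag n"
      unfolding forbidden_def using j that by blast
    then show ?thesis
      using diag_not_forbidden[of n] by auto
  qed
  then have "{n. diag n = h i n} \<subseteq> {..<H j}"
    using not_less by blast
  then show ?thesis
    using finite_subset by blast
qed

lemma infinite_hits_diag: "infinite {n. \<exists>i\<in>T k. diag n = h i n}"
proof -
  have "(\<lambda>j. H (prod_encode (k, j))) ` UNIV \<subseteq> {n. \<exists>i\<in>T k. diag n = h i n}"
  proof (rule image_subsetI)
    fix j
    have "\<exists>i\<in>T (fst (prod_decode (prod_encode (k, j)))).
        diag (H (prod_encode (k, j))) = h i (H (prod_encode (k, j)))"
      using admissible_diag unfolding admissible_def by blast
    then show "H (prod_encode (k, j)) \<in> {n. \<exists>i\<in>T k. diag n = h i n}"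
      by simp
  qed
  moreover have "inj (\<lambda>j. H (prod_encode (k, j)))"
  proof (rule injI)
    fix x y
    assume "H (prod_encode (k, x)) = H (prod_encode (k, y))"
    then have "prod_encode (k, x) = prod_encode (k, y)"
      using strict_mono_H strict_mono_eq by blast
    then show "x = y" by simp
  qed
  ultimately show ?thesis
    using range_inj_infinite infinite_super by blast
qed

lemma infinite_protected_diag: "infinite (protected diag k ` {k..})"
proof
  assume "finite (protected diag k ` {k..})"
  moreover have "protected diag k ` {k..} \<subseteq> \<phi> ` UNIV"
    using protected_diag(1) T_subset I_subset_range unfolding unhit_def by fastforce
  ultimately obtain C where C: "finite C" "protected diag k ` {k..} = \<phi> ` C"
    by (meson finite_subset_image)
  then obtain M where "C \<subseteq> {..<M}"
    using finite_nat_bounded by blast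
  then have "\<phi> ` C \<subseteq> \<phi> ` {..<max k M}"
    by (meson image_mono lessThan_subset_iff max.cobounded2 order_trans)
  moreover have "protected diag k (max k M) \<in> \<phi> ` C"
    using C(2) by (metis atLeast_iff image_eqI max.cobounded1)
  ultimately have "protected diag k (max k M) \<in> \<phi> ` {..<max k M}"
    by blast
  then show False
    using protected_diag(2) by simp
qed

lemma diag_avoids_protected:
  assumes "k \<le> r" and "H k \<le> n"
  shows "diag n \<noteq> h (protected diag k r) n"
proof (cases "n < H r")
  case True
  have "\<forall>m\<in>{H k..<H r}. h (protected diag k r) m \<noteq> diag m"
    using protected_diag(1)[OF assms(1)] unfolding unhit_def by blast
  moreover have "n \<in> {H k..<H r}"
    using True assms(2) by simp
  ultimately have "h (protected diag k r) n \<noteq> diag n"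
    by (rule bspec)
  then show ?thesis
    by (rule not_sym)
next
  case False
  then have "h (protected diag k r) n \<in> forbidden diag n"
    unfolding forbidden_def using assms(1) by force
  then show ?thesis
    using diag_not_forbidden[of n] by auto
qed

lemma infinite_avoiders_diag: "infinite {i \<in> T k. \<forall>n\<ge>H k. diag n \<noteq> h i n}"
proof -
  have "protected diag k ` {k..} \<subseteq> {i \<in> T k. \<forall>n\<ge>H k. diag n \<noteq> h i n}"
    using protected_diag(1) diag_avoids_protected unfolding unhit_def by auto
  with infinite_protected_diag show ?thesis
    using finite_subset by blast
qed

end

lemma injective_stages_exist:
  fixes h :: "'i \<Rightarrow> nat \<Rightarrow> nat"
  assumes T: "\<And>k. T k \<subseteq> I \<and> infinite (T k)"
    and different: "\<And>i j. i \<in> I \<Longrightarrow> j \<in> I \<Longrightarrow> i \<noteq> j \<Longrightarrow> finite {n. h i n = h j n}"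
  shows "\<exists>H. strict_mono H \<and>
    (\<forall>r. \<exists>S \<subseteq> T (fst (prod_decode r)). card S = (r + 2)\<^sup>2 \<and> inj_on (\<lambda>i. h i (H r)) S)"
proof -
  define good where
    "good r n \<longleftrightarrow> (\<exists>S \<subseteq> T (fst (prod_decode r)). card S = (r + 2)\<^sup>2 \<and> inj_on (\<lambda>i. h i n) S)"
    for r n
  have "eventually (good r) sequentially" for r
  proof -
    obtain S where S: "S \<subseteq> T (fst (prod_decode r))" "finite S" "card S = (r + 2)\<^sup>2"
      using infinite_arbitrarily_large[of "T (fst (prod_decode r))"] T by metis
    then have "eventually (\<lambda>n. inj_on (\<lambda>i. h i n) S) sequentially"
      by (intro eventually_inj_on_sequentially different) (use T in blast)+
    then show ?thesis
      unfolding good_def by (rule eventually_mono) (use S in blast)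
  qed
  then obtain H where "strict_mono H" "\<And>r. good r (H r)"
    using strict_mono_choice_sequentially[of good] by blast
  then show ?thesis
    unfolding good_def by blast
qed

lemma diagonal_step:
  fixes h :: "'i \<Rightarrow> nat \<Rightarrow> nat"
  assumes "countable I"
    and different: "\<And>i j. i \<in> I \<Longrightarrow> j \<in> I \<Longrightarrow> i \<noteq> j \<Longrightarrow> finite {n. h i n = h j n}"
    and "countable J" and J_subset: "\<And>X. X \<in> J \<Longrightarrow> X \<subseteq> I"
    and J_infinite: "\<And>X. X \<in> J \<Longrightarrow> infinite X"
  shows "\<exists>g. (\<forall>i\<in>I. finite {n. g n = h i n}) \<and>
    (\<forall>X\<in>J. infinite {n. \<exists>i\<in>X. g n = h i n} \<and> (\<exists>N. infinite {i \<in> X. \<forall>n\<ge>N. g n \<noteq> h i n}))"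
proof (cases "finite I")
  case True
  then have "J = {}"
    using J_subset J_infinite finite_subset by blast
  define g where "g n = Suc (\<Sum>i\<in>I. h i n)" for n
  have "g n \<noteq> h i n" if "i \<in> I" for i n
    unfolding g_def using member_le_sum[of i I "\<lambda>i. h i n"] True that by simp
  with \<open>J = {}\<close> show ?thesis
    by (intro exI[of _ g]) simp
next
  case False
  \<comment> \<open>I is added so that the enumeration T is meaningful even when J is empty.\<close>
  define T where "T = from_nat_into (insert I J)"
  have range_T: "range T = insert I J"
    unfolding T_def using \<open>countable J\<close> \<open>countable I\<close> by simp
  have T: "T k \<subseteq> I \<and> infinite (T k)" for k
  proof (cases "T k = I")
    case True
    then show ?thesis
      using \<open>infinite I\<close> by simp
  next
    case False
    then have "T k \<in> J"
      using range_T by blast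
    then show ?thesis
      using J_subset J_infinite by blast
  qed
  obtain H where H: "strict_mono H"
    "\<And>r. \<exists>S \<subseteq> T (fst (prod_decode r)). card S = (r + 2)\<^sup>2 \<and> inj_on (\<lambda>i. h i (H r)) S"
    using injective_stages_exist[of T I h] T different by blast
  interpret diagonalization h I "from_nat_into I" T H
  proof
    show "I \<subseteq> range (from_nat_into I)"
      using \<open>countable I\<close> by (rule subset_range_from_nat_into)
    show "T k \<subseteq> I" and "infinite (T k)" for k
      using T by simp_all
  qed (fact H)+
  show ?thesis
  proof (intro exI[of _ diag] conjI ballI)
    show "finite {n. diag n = h i n}" if "i \<in> I" for i
      using that by (rule finite_agree_diag)
    fix X
    assume "X \<in> J"
    then have "X \<in> range T"
      using range_T by blast
    then obtain k where "X = T k"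
      by blast
    then show "infinite {n. \<exists>i\<in>X. diag n = h i n}"
      and "\<exists>N. infinite {i \<in> X. \<forall>n\<ge>N. diag n \<noteq> h i n}"
      using infinite_hits_diag infinite_avoiders_diag by blast+
  qed
qed

lemma infinite_vimage_subset_range: "infinite X \<Longrightarrow> X \<subseteq> range c \<Longrightarrow> infinite (c -` X)"
  using finite_vimageD' by blast

definition graph_code :: "(nat \<Rightarrow> nat) \<Rightarrow> nat set" where
  "graph_code f = (\<lambda>n. prod_encode (n, f n)) ` UNIV"

lemma graph_code_Int: "graph_code f \<inter> graph_code g = (\<lambda>n. prod_encode (n, f n)) ` {n. f n = g n}"
  unfolding graph_code_def by (force simp: prod_encode_eq)

lemma infinite_graph_code: "infinite (graph_code f)"
  unfolding graph_code_def by (rule range_inj_infinite) (simp add: inj_def prod_encode_eq)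

lemma finite_graph_code_Int_iff: "finite (graph_code f \<inter> graph_code g) \<longleftrightarrow> finite {n. f n = g n}"
  unfolding graph_code_Int by (rule finite_image_iff) (simp add: inj_on_def prod_encode_eq)

locale stick_sequence =
  fixes S :: "'a::wellorder \<Rightarrow> 'a set"
  assumes uncountable_UNIV: "uncountable (UNIV :: 'a set)"
    and countable_lessThan: "countable {..<\<alpha> :: 'a}"
    and countable_S: "countable (S \<eta>)" and infinite_S: "infinite (S \<eta>)"
    and S_guesses: "uncountable (X :: 'a set) \<Longrightarrow> \<exists>\<eta>. S \<eta> \<subseteq> X"
begin

lemma countable_imp_bounded:
  assumes "countable (Z :: 'a set)"
  shows "\<exists>\<gamma>. \<forall>z\<in>Z. z < \<gamma>"
proof (rule ccontr)
  assume unbounded: "\<not> ?thesis"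
  have "\<gamma> \<in> (\<Union>z\<in>Z. {..z})" for \<gamma>
  proof -
    obtain z where "z \<in> Z" "\<not> z < \<gamma>"
      using unbounded by blast
    then show ?thesis
      using leI by blast
  qed
  then have "UNIV \<subseteq> (\<Union>z\<in>Z. {..z})"
    by blast
  moreover have "countable (\<Union>z\<in>Z. {..z})"
  proof -
    have "{..z} = insert z {..<z}" for z :: 'a
      by (auto simp: le_less)
    then show ?thesis
      using assms countable_lessThan by simp
  qed
  ultimately have "countable (UNIV :: 'a set)"
    by (rule countable_subset)
  with uncountable_UNIV show False
    by (rule notE)
qed

lemma uncountable_has_above:
  assumes "countable Z" and "uncountable (X :: 'a set)"
  shows "\<exists>\<alpha>\<in>X. \<forall>z\<in>Z. z < \<alpha>"
proof -
  obtain \<gamma> where \<gamma>: "\<forall>z\<in>Z. z < \<gamma>"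
    using countable_imp_bounded assms(1) by blast
  have "uncountable (X - {..<\<gamma>})"
    using assms(2) countable_lessThan by (rule uncountable_minus_countable)
  then obtain \<alpha> where "\<alpha> \<in> X" "\<not> \<alpha> < \<gamma>"
    by (metis DiffE countable_empty ex_in_conv lessThan_iff)
  then show ?thesis
    using \<gamma> order_less_le_trans leI by blast
qed

lemma uncountable_range_inj: "inj (c :: 'a \<Rightarrow> 'b) \<Longrightarrow> uncountable (range c)"
  using uncountable_UNIV countable_image_inj_on by blast

lemma uncountable_image_atLeast:
  assumes "inj (c :: 'a \<Rightarrow> 'b)"
  shows "uncountable (c ` {\<gamma>..})"
proof
  assume "countable (c ` {\<gamma>..})"
  then have "countable (c ` {\<gamma>..} \<union> c ` {..<\<gamma>})"
    using countable_lessThan by simp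
  moreover have "{\<gamma>..} \<union> {..<\<gamma>} = UNIV"
    using le_less_linear by auto
  ultimately have "countable (range c)"
    by (metis image_Un)
  with uncountable_range_inj[OF assms] show False
    by contradiction
qed

lemma countable_insert_S: "countable (insert \<eta> (S \<eta>))"
  using countable_S by simp

definition diagonalizes :: "('a \<Rightarrow> nat \<Rightarrow> nat) \<Rightarrow> 'a \<Rightarrow> (nat \<Rightarrow> nat) \<Rightarrow> bool" where
  "diagonalizes f \<alpha> g \<longleftrightarrow> (\<forall>\<beta><\<alpha>. finite {n. g n = f \<beta> n}) \<and>
     (\<forall>\<eta><\<alpha>. S \<eta> \<subseteq> {..<\<alpha>} \<longrightarrow> infinite {n. \<exists>\<beta>\<in>S \<eta>. g n = f \<beta> n} \<and>
        (\<exists>N. infinite {\<beta> \<in> S \<eta>. \<forall>n\<ge>N. g n \<noteq> f \<beta> n}))"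

lemma diagonalizes_cong:
  assumes "\<And>\<beta>. \<beta> < \<alpha> \<Longrightarrow> f \<beta> = f' \<beta>"
  shows "diagonalizes f \<alpha> g = diagonalizes f' \<alpha> g"
proof -
  have sets: "{n. \<exists>\<beta>\<in>S \<eta>. g n = f \<beta> n} = {n. \<exists>\<beta>\<in>S \<eta>. g n = f' \<beta> n}"
    "{\<beta> \<in> S \<eta>. \<forall>n\<ge>N. g n \<noteq> f \<beta> n} = {\<beta> \<in> S \<eta>. \<forall>n\<ge>N. g n \<noteq> f' \<beta> n}"
    if "S \<eta> \<subseteq> {..<\<alpha>}" for \<eta> N
  proof -
    have agree: "\<And>\<beta>. \<beta> \<in> S \<eta> \<Longrightarrow> f \<beta> = f' \<beta>"
      using assms that by blast
    show "{n. \<exists>\<beta>\<in>S \<eta>. g n = f \<beta> n} = {n. \<exists>\<beta>\<in>S \<eta>. g n = f' \<beta> n}"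
      using agree by (metis (no_types, lifting))
    show "{\<beta> \<in> S \<eta>. \<forall>n\<ge>N. g n \<noteq> f \<beta> n} = {\<beta> \<in> S \<eta>. \<forall>n\<ge>N. g n \<noteq> f' \<beta> n}"
      using agree by auto
  qed
  show ?thesis
    unfolding diagonalizes_def using assms sets
    by (intro arg_cong2[where f = "(\<and>)"] all_cong imp_cong refl) simp_all
qed

lemma diagonalizesD:
  assumes "diagonalizes f \<alpha> g"
  shows "\<beta> < \<alpha> \<Longrightarrow> finite {n. g n = f \<beta> n}"
    and "\<eta> < \<alpha> \<Longrightarrow> S \<eta> \<subseteq> {..<\<alpha>} \<Longrightarrow> infinite {n. \<exists>\<beta>\<in>S \<eta>. g n = f \<beta> n}"
    and "\<eta> < \<alpha> \<Longrightarrow> S \<eta> \<subseteq> {..<\<alpha>} \<Longrightarrow> \<exists>N. infinite {\<beta> \<in> S \<eta>. \<forall>n\<ge>N. g n \<noteq> f \<beta> n}"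
  using assms unfolding diagonalizes_def by blast+

lemma finite_agree_if_diagonalizes:
  assumes "diagonalizes f \<beta> (f \<beta>)" and "diagonalizes f \<beta>' (f \<beta>')" and "\<beta> \<noteq> \<beta>'"
  shows "finite {n. f \<beta> n = f \<beta>' n}"
proof (cases "\<beta> < \<beta>'")
  case True
  with assms(2) have "finite {n. f \<beta>' n = f \<beta> n}"
    by (rule diagonalizesD(1))
  then show ?thesis
    by (simp add: eq_commute)
next
  case False
  with assms(3) have "\<beta>' < \<beta>"
    by (simp add: not_less order.order_iff_strict)
  with assms(1) show ?thesis
    by (rule diagonalizesD(1))
qed

lemma diagonalizes_exists:
  assumes "\<And>\<beta>. \<beta> < \<alpha> \<Longrightarrow> diagonalizes f \<beta> (f \<beta>)"
  shows "\<exists>g. diagonalizes f \<alpha> g"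
proof -
  define J where "J = S ` {\<eta>. \<eta> < \<alpha> \<and> S \<eta> \<subseteq> {..<\<alpha>}}"
  have "countable {\<eta>. \<eta> < \<alpha> \<and> S \<eta> \<subseteq> {..<\<alpha>}}"
    by (rule countable_subset[OF _ countable_lessThan[of \<alpha>]]) blast
  then have "countable J"
    unfolding J_def by (rule countable_image)
  have "\<exists>g. (\<forall>\<beta>\<in>{..<\<alpha>}. finite {n. g n = f \<beta> n}) \<and>
      (\<forall>X\<in>J. infinite {n. \<exists>\<beta>\<in>X. g n = f \<beta> n} \<and> (\<exists>N. infinite {\<beta> \<in> X. \<forall>n\<ge>N. g n \<noteq> f \<beta> n}))"
  proof (rule diagonal_step)
    show "countable {..<\<alpha>}" by (rule countable_lessThan)
    show "finite {n. f \<beta> n = f \<beta>' n}" if "\<beta> \<in> {..<\<alpha>}" "\<beta>' \<in> {..<\<alpha>}" "\<beta> \<noteq> \<beta>'" for \<beta> \<beta>'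
      using that assms by (intro finite_agree_if_diagonalizes) simp_all
    show "countable J" by fact
    show "X \<subseteq> {..<\<alpha>}" and "infinite X" if "X \<in> J" for X
      using that infinite_S unfolding J_def by auto
  qed
  then obtain g where g: "\<forall>\<beta>\<in>{..<\<alpha>}. finite {n. g n = f \<beta> n}"
    "\<forall>X\<in>J. infinite {n. \<exists>\<beta>\<in>X. g n = f \<beta> n} \<and> (\<exists>N. infinite {\<beta> \<in> X. \<forall>n\<ge>N. g n \<noteq> f \<beta> n})"
    by blast
  have "diagonalizes f \<alpha> g"
    unfolding diagonalizes_def
  proof (intro conjI allI impI)
    show "finite {n. g n = f \<beta> n}" if "\<beta> < \<alpha>" for \<beta>
      using g(1) that by simp
    fix \<eta>
    assume "\<eta> < \<alpha>" and "S \<eta> \<subseteq> {..<\<alpha>}"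
    then have "S \<eta> \<in> J"
      unfolding J_def by blast
    then show "infinite {n. \<exists>\<beta>\<in>S \<eta>. g n = f \<beta> n}"
      and "\<exists>N. infinite {\<beta> \<in> S \<eta>. \<forall>n\<ge>N. g n \<noteq> f \<beta> n}"
      using g(2) by blast+
  qed
  then show ?thesis by blast
qed

lemma diagonal_family_exists: "\<exists>f. \<forall>\<alpha>. diagonalizes f \<alpha> (f \<alpha>)"
proof (rule dependent_wellorder_choice)
  show "diagonalizes f \<alpha> g = diagonalizes f' \<alpha> g" if "\<And>\<beta>. \<beta> < \<alpha> \<Longrightarrow> f \<beta> = f' \<beta>" for g f f' \<alpha>
    using that by (rule diagonalizes_cong)
  show "\<exists>g. diagonalizes f \<alpha> g" if "\<And>\<beta>. \<beta> < \<alpha> \<Longrightarrow> diagonalizes f \<beta> (f \<beta>)" for \<alpha> f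
    using that by (rule diagonalizes_exists)
qed

end

lemma stick_sequence_exists:
  assumes "omega1_type TYPE('a::wellorder)" and "stick TYPE('a)"
  shows "\<exists>S :: 'a \<Rightarrow> 'a set. stick_sequence S"
proof -
  from assms(2) obtain \<SS> :: "'a set set" and S :: "'a \<Rightarrow> 'a set"
    where \<SS>: "\<forall>s\<in>\<SS>. countable s \<and> infinite s" and S: "bij_betw S UNIV \<SS>"
      and guesses: "\<forall>X :: 'a set. uncountable X \<longrightarrow> (\<exists>s\<in>\<SS>. s \<subseteq> X)"
    unfolding stick_def by blast
  have "stick_sequence S"
  proof
    show "uncountable (UNIV :: 'a set)" and "countable {..<\<alpha>}" for \<alpha> :: 'a
      using assms(1) unfolding omega1_type_def lessThan_def by auto
    show "countable (S \<eta>)" and "infinite (S \<eta>)" for \<eta>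
      using \<SS> S by (auto simp: bij_betw_def)
    show "\<exists>\<eta>. S \<eta> \<subseteq> X" if "uncountable X" for X :: "'a set"
      using guesses that S by (metis bij_betw_def imageE)
  qed
  then show ?thesis
    by blast
qed

locale diagonal_family = stick_sequence S for S :: "'a::wellorder \<Rightarrow> 'a set" +
  fixes f :: "'a \<Rightarrow> nat \<Rightarrow> nat"
  assumes diagonalizes_f: "diagonalizes f \<alpha> (f \<alpha>)"
begin

definition a :: "'a \<Rightarrow> nat set" where
  "a \<alpha> = graph_code (f \<alpha>)"

lemma finite_a_Int:
  assumes "\<alpha> \<noteq> \<beta>"
  shows "finite (a \<alpha> \<inter> a \<beta>)"
  using finite_agree_if_diagonalizes[OF diagonalizes_f diagonalizes_f assms]
  unfolding a_def by (simp add: finite_graph_code_Int_iff)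

lemma inj_a: "inj a"
proof (rule injI, rule ccontr)
  fix \<alpha> \<beta> :: 'a
  assume "a \<alpha> = a \<beta>" and "\<alpha> \<noteq> \<beta>"
  then have "finite (a \<alpha>)"
    using finite_a_Int by fastforce
  then show False
    unfolding a_def by (simp add: infinite_graph_code)
qed

lemma almost_disjoint_range_a: "almost_disjoint UNIV (range a)"
  unfolding almost_disjoint_def
proof (intro conjI ballI impI)
  show "range a \<subseteq> Pow UNIV" by simp
  show "infinite x" if "x \<in> range a" for x
    using that infinite_graph_code by (auto simp: a_def)
  fix x y
  assume "x \<in> range a" "y \<in> range a" "x \<noteq> y"
  then obtain \<alpha> \<beta> where "x = a \<alpha>" "y = a \<beta>" "\<alpha> \<noteq> \<beta>"
    by blast
  then show "finite (x \<inter> y)"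
    using finite_a_Int by simp
qed

lemma infinite_a_Int_Union:
  assumes "\<eta> < \<alpha>" and "S \<eta> \<subseteq> {..<\<alpha>}"
  shows "infinite (a \<alpha> \<inter> \<Union>(a ` S \<eta>))"
proof -
  let ?code = "\<lambda>n. prod_encode (n, f \<alpha> n)"
  have "?code ` {n. \<exists>\<beta>\<in>S \<eta>. f \<alpha> n = f \<beta> n} \<subseteq> a \<alpha> \<inter> \<Union>(a ` S \<eta>)"
    unfolding a_def graph_code_def by force
  moreover have "infinite (?code ` {n. \<exists>\<beta>\<in>S \<eta>. f \<alpha> n = f \<beta> n})"
    using diagonalizesD(2)[OF diagonalizes_f assms]
    by (simp add: finite_image_iff inj_on_def prod_encode_eq)
  ultimately show ?thesis
    using finite_subset by blast
qed

lemma infinite_a_Int_subset: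
  assumes "\<eta> < \<alpha>" and "S \<eta> \<subseteq> {..<\<alpha>}"
  shows "\<exists>w. finite w \<and> infinite {\<beta> \<in> S \<eta>. a \<alpha> \<inter> a \<beta> \<subseteq> w}"
proof -
  obtain N where N: "infinite {\<beta> \<in> S \<eta>. \<forall>n\<ge>N. f \<alpha> n \<noteq> f \<beta> n}"
    using diagonalizesD(3)[OF diagonalizes_f assms] by blast
  define w where "w = (\<lambda>n. prod_encode (n, f \<alpha> n)) ` {..<N}"
  have "a \<alpha> \<inter> a \<beta> \<subseteq> w" if "\<forall>n\<ge>N. f \<alpha> n \<noteq> f \<beta> n" for \<beta>
  proof -
    have "{n. f \<alpha> n = f \<beta> n} \<subseteq> {..<N}"
      using that not_le by auto
    then show ?thesis
      unfolding a_def graph_code_Int w_def by (rule image_mono)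
  qed
  then have "{\<beta> \<in> S \<eta>. \<forall>n\<ge>N. f \<alpha> n \<noteq> f \<beta> n} \<subseteq> {\<beta> \<in> S \<eta>. a \<alpha> \<inter> a \<beta> \<subseteq> w}"
    by blast
  with N have "infinite {\<beta> \<in> S \<eta>. a \<alpha> \<inter> a \<beta> \<subseteq> w}"
    using finite_subset by blast
  moreover have "finite w"
    unfolding w_def by simp
  ultimately show ?thesis
    by blast
qed

lemma infinite_Union_Int:
  assumes "C \<subseteq> range a" "D \<subseteq> range a" "uncountable C" "uncountable D"
  shows "infinite (\<Union>C \<inter> \<Union>D)"
proof
  assume finite_Int: "finite (\<Union>C \<inter> \<Union>D)"
  have "uncountable (a -` D)"
    using countable_vimage[OF assms(2)] assms(4) by blast
  then obtain \<eta> where \<eta>: "S \<eta> \<subseteq> a -` D"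
    using S_guesses by blast
  have "uncountable (a -` C)"
    using countable_vimage[OF assms(1)] assms(3) by blast
  with countable_insert_S obtain \<alpha> where \<alpha>: "\<alpha> \<in> a -` C" "\<forall>z\<in>insert \<eta> (S \<eta>). z < \<alpha>"
    by (metis uncountable_has_above)
  then have infinite_Int: "infinite (a \<alpha> \<inter> \<Union>(a ` S \<eta>))"
    by (intro infinite_a_Int_Union) auto
  have "a \<alpha> \<inter> \<Union>(a ` S \<eta>) \<subseteq> \<Union>C \<inter> \<Union>D"
  proof (rule Int_mono)
    show "a \<alpha> \<subseteq> \<Union>C"
      using \<alpha>(1) by (simp add: Union_upper)
    show "\<Union>(a ` S \<eta>) \<subseteq> \<Union>D"
      using \<eta> by (intro Union_mono) (simp add: image_subset_iff_subset_vimage)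
  qed
  then have "finite (a \<alpha> \<inter> \<Union>(a ` S \<eta>))"
    using finite_Int by (rule finite_subset)
  with infinite_Int show False
    by contradiction
qed

lemma not_anti_luzin:
  assumes "B \<subseteq> range a" and "uncountable B"
  shows "\<not> anti_luzin B"
proof
  assume "anti_luzin B"
  then have "B \<subseteq> B \<longrightarrow> uncountable B \<longrightarrow>
      (\<exists>C D. C \<subseteq> B \<and> D \<subseteq> B \<and> uncountable C \<and> uncountable D \<and> finite (\<Union>C \<inter> \<Union>D))"
    unfolding anti_luzin_def by (rule spec)
  then obtain C D where CD: "C \<subseteq> B" "D \<subseteq> B" "uncountable C" "uncountable D"
      "finite (\<Union>C \<inter> \<Union>D)"
    using assms(2) by blast
  have "infinite (\<Union>C \<inter> \<Union>D)"
    using CD(1-4) assms(1) by (intro infinite_Union_Int) auto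
  with CD(5) show False
    by contradiction
qed

lemma infinite_earlier_small_Int:
  fixes c :: "'a \<Rightarrow> 'a"
  assumes "inj c"
  shows "\<exists>\<gamma> w. finite w \<and> infinite {\<delta>. \<delta> < \<gamma> \<and> a (c \<gamma>) \<inter> a (c \<delta>) \<subseteq> w}"
proof -
  from S_guesses[OF uncountable_range_inj[OF assms]] obtain \<eta> where \<eta>: "S \<eta> \<subseteq> range c"
    by blast
  have "countable (c -` S \<eta>)"
    using countable_image_inj_Int_vimage[OF assms countable_S] by simp
  from countable_imp_bounded[OF this] obtain \<gamma>0 where \<gamma>0: "\<forall>\<delta>\<in>c -` S \<eta>. \<delta> < \<gamma>0"
    by blast
  \<comment> \<open>Every member of S \<eta> sits before position \<gamma>0 of c, so a late \<alpha> has them all earlier.\<close>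
  from uncountable_has_above[OF countable_insert_S uncountable_image_atLeast[OF assms]]
  obtain \<alpha> where \<alpha>: "\<alpha> \<in> c ` {\<gamma>0..}" "\<forall>z\<in>insert \<eta> (S \<eta>). z < \<alpha>"
    by blast
  then obtain \<gamma> where \<gamma>: "\<alpha> = c \<gamma>" "\<gamma>0 \<le> \<gamma>"
    by auto
  have "\<eta> < \<alpha>" and "S \<eta> \<subseteq> {..<\<alpha>}"
    using \<alpha>(2) by auto
  from infinite_a_Int_subset[OF this] obtain w
    where "finite w" and w: "infinite {\<beta> \<in> S \<eta>. a \<alpha> \<inter> a \<beta> \<subseteq> w}"
    by blast
  have "infinite (c -` {\<beta> \<in> S \<eta>. a \<alpha> \<inter> a \<beta> \<subseteq> w})"
    using w by (rule infinite_vimage_subset_range) (use \<eta> in blast)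
  moreover have "c -` {\<beta> \<in> S \<eta>. a \<alpha> \<inter> a \<beta> \<subseteq> w} \<subseteq> {\<delta>. \<delta> < \<gamma> \<and> a (c \<gamma>) \<inter> a (c \<delta>) \<subseteq> w}"
  proof
    fix \<delta>
    assume "\<delta> \<in> c -` {\<beta> \<in> S \<eta>. a \<alpha> \<inter> a \<beta> \<subseteq> w}"
    then have \<delta>: "c \<delta> \<in> S \<eta>" "a \<alpha> \<inter> a (c \<delta>) \<subseteq> w"
      by auto
    have "\<delta> < \<gamma>0"
      using \<gamma>0 \<delta>(1) by simp
    with \<gamma>(2) have "\<delta> < \<gamma>"
      by (rule order_less_le_trans[rotated])
    with \<delta>(2) show "\<delta> \<in> {\<delta>. \<delta> < \<gamma> \<and> a (c \<gamma>) \<inter> a (c \<delta>) \<subseteq> w}"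
      by (simp add: \<gamma>(1))
  qed
  ultimately have "infinite {\<delta>. \<delta> < \<gamma> \<and> a (c \<gamma>) \<inter> a (c \<delta>) \<subseteq> w}"
    by (rule infinite_super[rotated])
  with \<open>finite w\<close> show ?thesis
    by blast
qed

lemma not_luzin:
  assumes "B \<subseteq> range a"
  shows "\<not> luzin TYPE('a) UNIV B"
proof
  assume "luzin TYPE('a) UNIV B"
  then obtain e :: "'a \<Rightarrow> nat set" where e: "bij_betw e UNIV B"
    and early: "\<And>w \<gamma>. finite w \<Longrightarrow> finite {\<delta>. \<delta> < \<gamma> \<and> e \<gamma> \<inter> e \<delta> \<subseteq> w}"
    unfolding luzin_def by blast
  define c where "c \<gamma> = inv a (e \<gamma>)" for \<gamma>
  have a_c: "a (c \<gamma>) = e \<gamma>" for \<gamma>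
  proof -
    have "e \<gamma> \<in> range a"
      using e assms bij_betwE by blast
    then show ?thesis
      unfolding c_def by (rule f_inv_into_f)
  qed
  have "inj c"
  proof (rule injI)
    fix \<gamma> \<gamma>'
    assume "c \<gamma> = c \<gamma>'"
    then have "e \<gamma> = e \<gamma>'"
      using a_c by metis
    with e show "\<gamma> = \<gamma>'"
      by (simp add: bij_betw_def inj_eq)
  qed
  from infinite_earlier_small_Int[OF this] obtain \<gamma> w
    where "finite w" and "infinite {\<delta>. \<delta> < \<gamma> \<and> a (c \<gamma>) \<inter> a (c \<delta>) \<subseteq> w}"
    by blast
  with early show False
    by (simp add: a_c)
qed

end

theorem theorem0p7:
  assumes "omega1_type TYPE('a::wellorder)"
    and "stick TYPE('a)"
  shows "\<exists>(W :: nat set) (A :: nat set set).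
           countable W \<and> almost_disjoint W A \<and> uncountable A \<and>
           (\<forall>B \<subseteq> A. uncountable B \<longrightarrow> \<not> anti_luzin B \<and> \<not> luzin TYPE('a) W B)"
proof -
  from assms obtain S :: "'a \<Rightarrow> 'a set" where "stick_sequence S"
    using stick_sequence_exists by blast
  then interpret stick_sequence S .
  obtain f where "\<And>\<alpha>. diagonalizes f \<alpha> (f \<alpha>)"
    using diagonal_family_exists by blast
  then interpret diagonal_family S f
    by unfold_locales
  show ?thesis
  proof (intro exI[of _ "UNIV :: nat set"] exI[of _ "range a"] conjI allI impI)
    show "countable (UNIV :: nat set)" by simp
    show "almost_disjoint UNIV (range a)" by (rule almost_disjoint_range_a)
    show "uncountable (range a)" using inj_a by (rule uncountable_range_inj)
    fix B
    assume "B \<subseteq> range a" and "uncountable B"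
    then show "\<not> anti_luzin B"
      by (rule not_anti_luzin)
    show "\<not> luzin TYPE('a) UNIV B"
      using \<open>B \<subseteq> range a\<close> by (rule not_luzin)
  qed
qed

end
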